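(* Let $F$ be any one of the functions $H_{\mathrm{pen}}$, $V_{\mathrm{pen}}$, $W_{\mathrm{pen}}$, $U$ on $\Lambda^M$ defined below (for a fixed realization of $\mathbf y$). Then $F$ is convex and differentiable, and for all $\boldsymbol\theta,\boldsymbol\theta_0\in\Lambda^M$, \[F(\boldsymbol\theta)=F(\boldsymbol\theta_0)+\nabla F(\boldsymbol\theta_0)^T(\boldsymbol\theta-\boldsymbol\theta_0)+\tfrac12\|\hat{\boldsymbol\mu}_{\boldsymbol\theta}-\hat{\boldsymbol\mu}_{\boldsymbol\theta_0}\|_2^2.\] Furthermore, if $\hat{\boldsymbol\theta}$ is a minimizer of $F$ over $\Lambda^M$, then for all $\boldsymbol\theta\in\Lambda^M$, $F(\boldsymbol\theta)\ge F(\hat{\boldsymbol\theta})+\tfrac12\|\hat{\boldsymbol\mu}_{\boldsymbol\theta}-\hat{\boldsymbol\mu}_{\hat{\boldsymbol\theta}}\|_2^2$.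
   Context: Data $\mathbf y\in\mathbf R^n$; for $j=1,\dots,M$, $\hat{\boldsymbol\mu}_j=A_j\mathbf y+\mathbf b_j$ with $n\times n$ matrices $A_j$ and $\mathbf b_j\in\mathbf R^n$. $\Lambda^M=\{\boldsymbol\theta\in\mathbf R^M:\sum_j\theta_j=1,\theta_j\ge0\}$; $A_{\boldsymbol\theta}=\sum_j\theta_jA_j$, $\mathbf b_{\boldsymbol\theta}=\sum_j\theta_j\mathbf b_j$, $\hat{\boldsymbol\mu}_{\boldsymbol\theta}=A_{\boldsymbol\theta}\mathbf y+\mathbf b_{\boldsymbol\theta}$. $\mathrm{pen}(\boldsymbol\theta)=\sum_j\theta_j\|\hat{\boldsymbol\mu}_{\boldsymbol\theta}-\hat{\boldsymbol\mu}_j\|_2^2$. With $\sigma^2>0$, $\hat\sigma^2\in\mathbf R$, $\hat K^2\ge0$ and $\boldsymbol\pi\in\Lambda^M$ with positive entries: $H_{\mathrm{pen}}(\boldsymbol\theta)=\|\hat{\boldsymbol\mu}_{\boldsymbol\theta}\|_2^2-2\mathbf y^T\hat{\boldsymbol\mu}_{\boldsymbol\theta}+2\sigma^2\mathrm{Tr}(A_{\boldsymbol\theta})+\frac12\mathrm{pen}(\boldsymbol\theta)$; $V_{\mathrm{pen}}(\boldsymbol\theta)=H_{\mathrm{pen}}(\boldsymbol\theta)+46\sigma^2\sum_j\theta_j\log(1/\pi_j)$; $W_{\mathrm{pen}}(\boldsymbol\theta)=\|\hat{\boldsymbol\mu}_{\boldsymbol\theta}\|_2^2-2\mathbf y^T\hat{\boldsymbol\mu}_{\boldsymbol\theta}+2\hat\sigma^2\mathrm{Tr}(A_{\boldsymbol\theta})+\frac12\mathrm{pen}(\boldsymbol\theta)$;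 $U(\boldsymbol\theta)=\|\hat{\boldsymbol\mu}_{\boldsymbol\theta}\|_2^2-2\mathbf y^T\hat{\boldsymbol\mu}_{\boldsymbol\theta}+\frac12\mathrm{pen}(\boldsymbol\theta)+32\hat K^2\sum_j\theta_j\log(1/\pi_j)$. These functions are polynomials in $\boldsymbol\theta\in\mathbf R^M$, and $\nabla F$ is their gradient. *)

theory Defs
  imports "HOL-Analysis.Analysis"
begin

text \<open>Index type 'm stands for {1..M}, index type 'n for {1..n}.
  Estimators: mu_j = A_j y + b_j.\<close>

definition LambdaM :: "(real^'m) set" where
  "LambdaM = {\<theta>. sum (\<lambda>j. \<theta>$j) UNIV = 1 \<and> (\<forall>j. \<theta>$j \<ge> 0)}"

definition Amix :: "('m \<Rightarrow> real^'n^'n) \<Rightarrow> real^'m \<Rightarrow> real^'n^'n" where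
  "Amix A \<theta> = (\<Sum>j\<in>UNIV. \<theta>$j *\<^sub>R A j)"

definition bmix :: "('m \<Rightarrow> real^'n) \<Rightarrow> real^'m \<Rightarrow> real^'n" where
  "bmix b \<theta> = (\<Sum>j\<in>UNIV. \<theta>$j *\<^sub>R b j)"

definition muj :: "('m \<Rightarrow> real^'n^'n) \<Rightarrow> ('m \<Rightarrow> real^'n) \<Rightarrow> real^'n \<Rightarrow> 'm \<Rightarrow> real^'n" where
  "muj A b y j = A j *v y + b j"

definition mutheta :: "('m \<Rightarrow> real^'n^'n) \<Rightarrow> ('m \<Rightarrow> real^'n) \<Rightarrow> real^'n \<Rightarrow> real^'m \<Rightarrow> real^'n" where
  "mutheta A b y \<theta> = Amix A \<theta> *v y + bmix b \<theta>"

definition pen :: "('m \<Rightarrow> real^'n^'n) \<Rightarrow> ('m \<Rightarrow> real^'n) \<Rightarrow> real^'n \<Rightarrow> real^'m \<Rightarrow> real" where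
  "pen A b y \<theta> = (\<Sum>j\<in>UNIV. \<theta>$j * (norm (mutheta A b y \<theta> - muj A b y j))\<^sup>2)"

definition Hpen :: "('m \<Rightarrow> real^'n^'n) \<Rightarrow> ('m \<Rightarrow> real^'n) \<Rightarrow> real^'n \<Rightarrow> real \<Rightarrow> real^'m \<Rightarrow> real" where
  "Hpen A b y sigma2 \<theta> = (norm (mutheta A b y \<theta>))\<^sup>2 - 2 * (y \<bullet> mutheta A b y \<theta>)
     + 2 * sigma2 * trace (Amix A \<theta>) + pen A b y \<theta> / 2"

definition Vpen :: "('m \<Rightarrow> real^'n^'n) \<Rightarrow> ('m \<Rightarrow> real^'n) \<Rightarrow> real^'n \<Rightarrow> real \<Rightarrow> real^'m \<Rightarrow> real^'m \<Rightarrow> real" where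
  "Vpen A b y sigma2 \<pi> \<theta> = Hpen A b y sigma2 \<theta> + 46 * sigma2 * (\<Sum>j\<in>UNIV. \<theta>$j * ln (1 / \<pi>$j))"

definition Wpen :: "('m \<Rightarrow> real^'n^'n) \<Rightarrow> ('m \<Rightarrow> real^'n) \<Rightarrow> real^'n \<Rightarrow> real \<Rightarrow> real^'m \<Rightarrow> real" where
  "Wpen A b y sigmahat2 \<theta> = (norm (mutheta A b y \<theta>))\<^sup>2 - 2 * (y \<bullet> mutheta A b y \<theta>)
     + 2 * sigmahat2 * trace (Amix A \<theta>) + pen A b y \<theta> / 2"

definition Ufun :: "('m \<Rightarrow> real^'n^'n) \<Rightarrow> ('m \<Rightarrow> real^'n) \<Rightarrow> real^'n \<Rightarrow> real \<Rightarrow> real^'m \<Rightarrow> real^'m \<Rightarrow> real" where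
  "Ufun A b y Khat2 \<pi> \<theta> = (norm (mutheta A b y \<theta>))\<^sup>2 - 2 * (y \<bullet> mutheta A b y \<theta>)
     + pen A b y \<theta> / 2 + 32 * Khat2 * (\<Sum>j\<in>UNIV. \<theta>$j * ln (1 / \<pi>$j))"

end

theory Submission
  imports Defs
begin

text \<open>Each criterion equals, on all of R^M, (\<Sum>j. \<theta>_j) |\<mu>_\<theta>|^2 / 2 + \<Sum>j. \<theta>_j c_j with
  \<theta> \<mapsto> \<mu>_\<theta> linear. On the hyperplane \<Sum>j. \<theta>_j = 1 its second-order Taylor expansion is
  therefore exact, with remainder |\<mu>_\<theta> - \<mu>_\<theta>0|^2 / 2 \<ge> 0. Hence F lies above its tangent
  planes on the simplex, which gives convexity; and at a minimizer the linear term is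
  nonnegative in every feasible direction, since otherwise a short step along that direction
  would decrease F, which leaves the quadratic remainder as a lower bound.\<close>

lemma nonneg_if_nonneg_perturbations:
  fixes D C :: real
  assumes "\<And>t. 0 < t \<Longrightarrow> t \<le> 1 \<Longrightarrow> 0 \<le> D + t * C"
  shows "0 \<le> D"
proof (rule ccontr)
  assume "\<not> 0 \<le> D"
  define t where "t = min 1 (- D / (2 * (\<bar>C\<bar> + 1)))"
  have t: "0 < t" "t \<le> 1" using \<open>\<not> 0 \<le> D\<close> by (auto simp: t_def divide_neg_pos add_pos_nonneg)
  have "t * C \<le> t * \<bar>C\<bar>" using t by (simp add: mult_left_mono)
  also have "\<dots> \<le> - D / (2 * (\<bar>C\<bar> + 1)) * \<bar>C\<bar>"
    by (rule mult_right_mono) (simp_all add: t_def)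
  also have "\<dots> < - D"
  proof -
    have "D * \<bar>C\<bar> \<le> 0" using \<open>\<not> 0 \<le> D\<close> by (simp add: mult_nonpos_nonneg)
    then show ?thesis using \<open>\<not> 0 \<le> D\<close> by (simp add: field_simps)
  qed
  finally show False using assms[OF t] by linarith
qed

lemma quadratic_growth_at_minimizer:
  fixes f Q :: "'a::real_vector \<Rightarrow> real"
  assumes "convex S" "x \<in> S" "y \<in> S"
    and minimal: "\<And>z. z \<in> S \<Longrightarrow> f x \<le> f z"
    and "linear L"
    and expansion: "\<And>z. z \<in> S \<Longrightarrow> f z = f x + L (z - x) + Q (z - x)"
    and homogeneous: "\<And>t h. Q (t *\<^sub>R h) = t\<^sup>2 * Q h"
  shows "f x + Q (y - x) \<le> f y"
proof -
  have "0 \<le> L (y - x) + t * Q (y - x)" if t: "0 < t" "t \<le> 1" for t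
  proof -
    have "x + t *\<^sub>R (y - x) \<in> S"
      using convexD_alt[OF assms(1-3), of t] t by (simp add: algebra_simps)
    then have "0 \<le> L (t *\<^sub>R (y - x)) + Q (t *\<^sub>R (y - x))"
      using minimal expansion by fastforce
    then have "0 \<le> t * (L (y - x) + t * Q (y - x))"
      by (simp only: linear_scale[OF \<open>linear L\<close>] homogeneous) (simp add: power2_eq_square algebra_simps)
    then show ?thesis using t by (simp add: zero_le_mult_iff)
  qed
  then have "0 \<le> L (y - x)" by (rule nonneg_if_nonneg_perturbations)
  then show ?thesis using expansion[OF \<open>y \<in> S\<close>] by simp
qed

lemma convex_on_if_above_tangents:
  fixes f :: "'a::real_vector \<Rightarrow> real"
  assumes "convex S"
    and linear: "\<And>x. x \<in> S \<Longrightarrow> linear (L x)"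
    and above: "\<And>x z. x \<in> S \<Longrightarrow> z \<in> S \<Longrightarrow> f x + L x (z - x) \<le> f z"
  shows "convex_on S f"
proof (rule convex_onI[OF _ \<open>convex S\<close>])
  fix t :: real and a b assume t: "0 < t" "t < 1" and ab: "a \<in> S" "b \<in> S"
  define z where "z = (1 - t) *\<^sub>R a + t *\<^sub>R b"
  have "z \<in> S" using convexD_alt[OF \<open>convex S\<close> ab, of t] t by (simp add: z_def)
  have "a - z = t *\<^sub>R (a - b)" "b - z = - (1 - t) *\<^sub>R (a - b)"
    by (simp_all add: z_def algebra_simps)
  then have "f z + t * L z (a - b) \<le> f a" "f z - (1 - t) * L z (a - b) \<le> f b"
    using above[OF \<open>z \<in> S\<close> ab(1)] above[OF \<open>z \<in> S\<close> ab(2)]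
    by (simp_all only: linear_scale[OF linear[OF \<open>z \<in> S\<close>]]) (simp_all add: algebra_simps)
  then have "(1 - t) * (f z + t * L z (a - b)) + t * (f z - (1 - t) * L z (a - b)) \<le> (1 - t) * f a + t * f b"
    using t by (intro add_mono mult_left_mono) auto
  then show "f z \<le> (1 - t) * f a + t * f b" by (simp add: algebra_simps)
qed

definition mixture :: "('m::finite \<Rightarrow> 'a::real_vector) \<Rightarrow> real^'m \<Rightarrow> 'a" where
  "mixture \<mu> \<theta> = (\<Sum>j\<in>UNIV. \<theta>$j *\<^sub>R \<mu> j)"

lemma linear_mixture: "linear (mixture \<mu>)"
  by (rule linearI) (simp_all add: mixture_def scaleR_add_left sum.distrib scaleR_sum_right)

lemma mixture_diff: "mixture \<mu> (\<theta> - \<theta>0) = mixture \<mu> \<theta> - mixture \<mu> \<theta>0"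
  by (rule linear_diff[OF linear_mixture])

text \<open>The common form of all four criteria on the whole of R^M, where their gradient lives;
  the factor \<Sum>j. \<theta>_j, equal to 1 on the simplex, comes from the penalty.\<close>
definition aggregation_objective :: "('m::finite \<Rightarrow> 'a::real_inner) \<Rightarrow> ('m \<Rightarrow> real) \<Rightarrow> real^'m \<Rightarrow> real" where
  "aggregation_objective \<mu> c \<theta> =
     (\<Sum>j\<in>UNIV. \<theta>$j) * (norm (mixture \<mu> \<theta>))\<^sup>2 / 2 + (\<Sum>j\<in>UNIV. \<theta>$j * c j)"

definition aggregation_objective_deriv ::
    "('m::finite \<Rightarrow> 'a::real_inner) \<Rightarrow> ('m \<Rightarrow> real) \<Rightarrow> real^'m \<Rightarrow> real^'m \<Rightarrow> real" where
  "aggregation_objective_deriv \<mu> c \<theta>0 h =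
     (\<Sum>j\<in>UNIV. h$j) * (norm (mixture \<mu> \<theta>0))\<^sup>2 / 2
     + (\<Sum>j\<in>UNIV. \<theta>0$j) * (mixture \<mu> \<theta>0 \<bullet> mixture \<mu> h) + (\<Sum>j\<in>UNIV. h$j * c j)"

lemma has_derivative_aggregation_objective:
  "(aggregation_objective \<mu> c has_derivative aggregation_objective_deriv \<mu> c \<theta>0) (at \<theta>0)"
proof -
  have "(mixture \<mu> has_derivative mixture \<mu>) (at \<theta>0)"
    using linear_mixture linear_conv_bounded_linear bounded_linear_imp_has_derivative by blast
  then show ?thesis
    unfolding aggregation_objective_def[abs_def] aggregation_objective_deriv_def[abs_def]
      power2_norm_eq_inner
    by (auto intro!: derivative_eq_intros bounded_linear_imp_has_derivative bounded_linear_vec_nth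
        simp: inner_commute algebra_simps)
qed

lemma aggregation_objective_expansion:
  assumes "(\<Sum>j\<in>UNIV. \<theta>$j) = 1" "(\<Sum>j\<in>UNIV. \<theta>0$j) = 1"
  shows "aggregation_objective \<mu> c \<theta> = aggregation_objective \<mu> c \<theta>0
           + aggregation_objective_deriv \<mu> c \<theta>0 (\<theta> - \<theta>0) + (norm (mixture \<mu> (\<theta> - \<theta>0)))\<^sup>2 / 2"
proof -
  have "(\<Sum>j\<in>UNIV. (\<theta> - \<theta>0)$j) = 0" "(\<Sum>j\<in>UNIV. (\<theta> - \<theta>0)$j * c j) = (\<Sum>j\<in>UNIV. \<theta>$j * c j) - (\<Sum>j\<in>UNIV. \<theta>0$j * c j)"
    using assms by (simp_all add: sum_subtractf left_diff_distrib)
  moreover have "(norm (mixture \<mu> \<theta>))\<^sup>2 = (norm (mixture \<mu> \<theta>0))\<^sup>2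
      + 2 * (mixture \<mu> \<theta>0 \<bullet> mixture \<mu> (\<theta> - \<theta>0)) + (norm (mixture \<mu> (\<theta> - \<theta>0)))\<^sup>2"
    by (simp add: mixture_diff power2_norm_eq_inner inner_diff inner_commute algebra_simps)
  ultimately show ?thesis
    using assms by (simp add: aggregation_objective_def aggregation_objective_deriv_def)
qed

lemma sum_LambdaM: "\<theta> \<in> LambdaM \<Longrightarrow> (\<Sum>j\<in>UNIV. \<theta>$j) = 1"
  by (simp add: LambdaM_def)

lemma convex_LambdaM: "convex LambdaM"
  unfolding convex_def LambdaM_def
  by (auto simp: sum.distrib sum_distrib_left[symmetric])

lemma mutheta_eq_mixture: "mutheta A b y = mixture (muj A b y)"
proof
  fix \<theta>
  have "Amix A \<theta> *v y = (\<Sum>j\<in>UNIV. \<theta>$j *\<^sub>R (A j *v y))"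
    by (simp add: vec_eq_iff Amix_def matrix_vector_mult_def sum_component sum_distrib_left
        sum_distrib_right mult.assoc) (subst sum.swap, simp)
  then show "mutheta A b y \<theta> = mixture (muj A b y) \<theta>"
    by (simp add: mutheta_def mixture_def muj_def bmix_def scaleR_add_right sum.distrib)
qed

lemma trace_Amix: "trace (Amix A \<theta>) = (\<Sum>j\<in>UNIV. \<theta>$j * trace (A j))"
  by (simp add: trace_def Amix_def sum_component sum_distrib_left) (rule sum.swap)

text \<open>Expanding the squares in pen around the mixture m = \<Sum>j. \<theta>_j \<mu>_j gives
  pen \<theta> = (\<Sum>j. \<theta>_j) |m|^2 - 2 |m|^2 + (\<Sum>j. \<theta>_j |\<mu>_j|^2).\<close>
lemma empirical_risk_pen_eq_aggregation_objective:
  "(norm (mutheta A b y \<theta>))\<^sup>2 - 2 * (y \<bullet> mutheta A b y \<theta>) + pen A b y \<theta> / 2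
   = aggregation_objective (muj A b y) (\<lambda>j. (norm (muj A b y j))\<^sup>2 / 2 - 2 * (y \<bullet> muj A b y j)) \<theta>"
proof -
  define m where "m = mutheta A b y \<theta>"
  define \<mu> where "\<mu> = muj A b y"
  have m: "m = (\<Sum>j\<in>UNIV. \<theta>$j *\<^sub>R \<mu> j)"
    by (simp add: m_def \<mu>_def mutheta_eq_mixture mixture_def)
  have ym: "y \<bullet> m = (\<Sum>j\<in>UNIV. \<theta>$j * (y \<bullet> \<mu> j))"
    by (simp add: m inner_sum_right)
  have mixture: "mixture \<mu> \<theta> = m"
    by (simp add: m_def \<mu>_def mutheta_eq_mixture)
  have mm: "m \<bullet> m = (\<Sum>j\<in>UNIV. \<theta>$j * (m \<bullet> \<mu> j))"
    by (subst (2) m) (simp add: inner_sum_right)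
  have "pen A b y \<theta> = (\<Sum>j\<in>UNIV. \<theta>$j * ((norm m)\<^sup>2 - 2 * (m \<bullet> \<mu> j) + (norm (\<mu> j))\<^sup>2))"
    by (simp add: pen_def flip: m_def \<mu>_def)
       (simp add: power2_norm_eq_inner inner_diff inner_commute algebra_simps)
  also have "\<dots> = (\<Sum>j\<in>UNIV. \<theta>$j) * (norm m)\<^sup>2 - 2 * (m \<bullet> m) + (\<Sum>j\<in>UNIV. \<theta>$j * (norm (\<mu> j))\<^sup>2)"
    by (simp add: mm algebra_simps sum.distrib sum_subtractf sum_distrib_left sum_distrib_right)
  finally have pen: "pen A b y \<theta> = \<dots>" .
  have "(\<Sum>j\<in>UNIV. \<theta>$j * ((norm (\<mu> j))\<^sup>2 / 2 - 2 * (y \<bullet> \<mu> j)))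
      = (\<Sum>j\<in>UNIV. \<theta>$j * (norm (\<mu> j))\<^sup>2) / 2 - 2 * (\<Sum>j\<in>UNIV. \<theta>$j * (y \<bullet> \<mu> j))"
    by (simp add: sum_subtractf sum_divide_distrib sum_distrib_left right_diff_distrib mult.left_commute)
  then show ?thesis
    unfolding aggregation_objective_def mixture ym pen \<mu>_def[symmetric] m_def[symmetric]
    by (simp add: power2_norm_eq_inner field_simps)
qed

lemma aggregation_objective_add_linear:
  "aggregation_objective \<mu> c \<theta> + (\<Sum>j\<in>UNIV. \<theta>$j * d j) = aggregation_objective \<mu> (\<lambda>j. c j + d j) \<theta>"
  by (simp add: aggregation_objective_def algebra_simps sum.distrib)

lemma penalized_criteria_are_aggregation_objectives:
  assumes "F \<in> {Hpen A b y sigma2, Vpen A b y sigma2 \<pi>, Wpen A b y sigmahat2, Ufun A b y Khat2 \<pi>}"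
  shows "\<exists>c. F = aggregation_objective (muj A b y) c"
proof -
  define g where "g j = (norm (muj A b y j))\<^sup>2 / 2 - 2 * (y \<bullet> muj A b y j)" for j
  note G = empirical_risk_pen_eq_aggregation_objective[of A b y, folded g_def]
  have H: "Hpen A b y s = aggregation_objective (muj A b y) (\<lambda>j. g j + 2 * s * trace (A j))" for s
    by (rule ext, simp add: Hpen_def trace_Amix sum_distrib_left algebra_simps
        flip: G aggregation_objective_add_linear)
  have V: "Vpen A b y sigma2 \<pi> = aggregation_objective (muj A b y)
             (\<lambda>j. (g j + 2 * sigma2 * trace (A j)) + 46 * sigma2 * ln (1 / \<pi>$j))"
    by (rule ext, simp add: Vpen_def H sum_distrib_left sum.distrib algebra_simps
        flip: G aggregation_objective_add_linear)
  have W: "Wpen A b y sigmahat2 = Hpen A b y sigmahat2"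
    by (simp add: fun_eq_iff Wpen_def Hpen_def)
  have U: "Ufun A b y Khat2 \<pi> = aggregation_objective (muj A b y) (\<lambda>j. g j + 32 * Khat2 * ln (1 / \<pi>$j))"
    by (rule ext, simp add: Ufun_def sum_distrib_left algebra_simps
        flip: G aggregation_objective_add_linear)
  show ?thesis using assms H V W U by auto
qed

theorem lemma8p1:
  fixes A :: "'m::finite \<Rightarrow> real^'n::finite^'n"
    and b :: "'m \<Rightarrow> real^'n"
    and y :: "real^'n"
    and sigma2 sigmahat2 Khat2 :: real
    and \<pi> :: "real^'m"
    and F :: "real^'m \<Rightarrow> real"
  assumes sigma2_pos: "sigma2 > 0"
    and Khat2_nonneg: "Khat2 \<ge> 0"
    and pi_simplex: "\<pi> \<in> LambdaM"
    and pi_pos: "\<forall>j. \<pi>$j > 0"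
    and F_choice: "F \<in> {Hpen A b y sigma2, Vpen A b y sigma2 \<pi>, Wpen A b y sigmahat2, Ufun A b y Khat2 \<pi>}"
  shows "convex_on LambdaM F
    \<and> (\<forall>\<theta>0. F differentiable (at \<theta>0))
    \<and> (\<forall>\<theta>\<in>LambdaM. \<forall>\<theta>0\<in>LambdaM.
          F \<theta> = F \<theta>0 + frechet_derivative F (at \<theta>0) (\<theta> - \<theta>0)
                 + (norm (mutheta A b y \<theta> - mutheta A b y \<theta>0))\<^sup>2 / 2)
    \<and> (\<forall>\<theta>hat\<in>LambdaM. (\<forall>\<theta>\<in>LambdaM. F \<theta>hat \<le> F \<theta>) \<longrightarrow>
          (\<forall>\<theta>\<in>LambdaM. F \<theta> \<ge> F \<theta>hat + (norm (mutheta A b y \<theta> - mutheta A b y \<theta>hat))\<^sup>2 / 2))"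
proof -
  define \<mu> where "\<mu> = muj A b y"
  obtain c where F: "F = aggregation_objective \<mu> c"
    using penalized_criteria_are_aggregation_objectives[OF F_choice] unfolding \<mu>_def by blast
  define D where "D = aggregation_objective_deriv \<mu> c"
  have deriv: "(F has_derivative D \<theta>0) (at \<theta>0)" for \<theta>0
    unfolding F D_def by (rule has_derivative_aggregation_objective)
  have expansion: "F \<theta> = F \<theta>0 + D \<theta>0 (\<theta> - \<theta>0) + (norm (mixture \<mu> (\<theta> - \<theta>0)))\<^sup>2 / 2"
    if "\<theta> \<in> LambdaM" "\<theta>0 \<in> LambdaM" for \<theta> \<theta>0
    using that unfolding F D_def by (intro aggregation_objective_expansion sum_LambdaM)
  have above_tangent: "F \<theta>0 + D \<theta>0 (\<theta> - \<theta>0) \<le> F \<theta>"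
    if "\<theta> \<in> LambdaM" "\<theta>0 \<in> LambdaM" for \<theta> \<theta>0
    using expansion[OF that] by simp
  have growth: "F \<theta>hat + (norm (mixture \<mu> (\<theta> - \<theta>hat)))\<^sup>2 / 2 \<le> F \<theta>"
    if "\<theta>hat \<in> LambdaM" "\<forall>\<theta>\<in>LambdaM. F \<theta>hat \<le> F \<theta>" "\<theta> \<in> LambdaM" for \<theta>hat \<theta>
    using that
    by (intro quadratic_growth_at_minimizer[OF convex_LambdaM _ _ _ has_derivative_linear[OF deriv] expansion])
      (auto simp: linear_scale[OF linear_mixture] power_mult_distrib)
  have gradient: "frechet_derivative F (at \<theta>0) = D \<theta>0" for \<theta>0
    using frechet_derivative_at[OF deriv] by simp
  have aggregate_diff: "mutheta A b y \<theta> - mutheta A b y \<theta>0 = mixture \<mu> (\<theta> - \<theta>0)" for \<theta> \<theta>0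
    by (simp add: \<mu>_def mutheta_eq_mixture mixture_diff)
  have "convex_on LambdaM F"
    by (rule convex_on_if_above_tangents[OF convex_LambdaM has_derivative_linear[OF deriv] above_tangent])
  moreover have "F differentiable (at \<theta>0)" for \<theta>0
    using deriv by (auto simp: differentiable_def)
  ultimately show ?thesis
    unfolding gradient aggregate_diff using expansion growth by blast
qed

end
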